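(* Let $\sigma>0$, $T>0$, and let $x(t)=\sigma w(t)$, where $w$ is a standard Wiener process (i.e. the solution of $\mathrm{d}x=\sigma\,\mathrm{d}w$, $x(0)=0$). Let $h>0$ be such that $N=T/h$ is a positive integer, let $M\ge1$ be an integer and $B=MN$. Let $x_1,\dots,x_M$ be independent copies of $x$ and define $\hat V_M(h)=\frac1M\sum_{i=1}^M\sum_{k=0}^{N-1}h\,x_i^2(kh)$, $V_T=\int_0^T\mathbb{E}[x^2(t)]\,\mathrm{d}t$ and $\mathrm{MSE}_T(h,B)=\mathbb{E}[(\hat V_M(h)-V_T)^2]$. Then $$\mathrm{MSE}_T(h,B)=\frac{\sigma^4T^2}{4}h^2+\frac{\sigma^4T^5}{3}\cdot\frac{1}{hB}+\frac{\sigma^4T^2(-2T^2+2hT-h^2)}{3B}.$$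
   Context: This is the marginally stable case (drift coefficient $a=0$) of Monte-Carlo evaluation of the undiscounted cost $\int_0^T x^2(t)\,dt$ over a finite horizon $T$ using $M$ episodes each sampled at $N=T/h$ equally spaced times, with data budget $B=MN$. *)

theory Defs
  imports "HOL-Probability.Probability"
begin

definition wiener_process :: "'a measure \<Rightarrow> (real \<Rightarrow> 'a \<Rightarrow> real) \<Rightarrow> bool" where
  "wiener_process P W \<longleftrightarrow>
     prob_space P \<and>
     (\<forall>t. W t \<in> borel_measurable P) \<and>
     (AE \<omega> in P. W 0 \<omega> = 0) \<and>
     (AE \<omega> in P. continuous_on {0..} (\<lambda>t. W t \<omega>)) \<and>
     (\<forall>s t. 0 \<le> s \<and> s < t \<longrightarrow>
        distributed P lborel (\<lambda>\<omega>. W t \<omega> - W s \<omega>)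
          (\<lambda>x. ennreal (normal_density 0 (sqrt (t - s)) x))) \<and>
     (\<forall>ts. sorted_wrt (<) ts \<and> (\<forall>t\<in>set ts. 0 \<le> t) \<longrightarrow>
        prob_space.indep_vars P (\<lambda>_. borel)
          (\<lambda>k \<omega>. W (ts ! Suc k) \<omega> - W (ts ! k) \<omega>) {..<length ts - 1})"

end

theory Submission
  imports Defs
begin

text \<open>With \<open>\<tau>\<^sub>k = k h\<close> and \<open>G = \<Sum>\<^sub>i \<Sum>\<^sub>k W\<^sub>i(\<tau>\<^sub>k)\<^sup>2\<close>, the estimator is \<open>(h \<sigma>\<^sup>2 / M) G\<close> and
  \<open>V\<^sub>T = \<sigma>\<^sup>2 T\<^sup>2 / 2\<close>, so the mean square error is a quadratic expression in the first two moments
  of \<open>G\<close>. These reduce to the Gaussian fourth-moment identity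
  \<open>E[W(s)\<^sup>2 W(t)\<^sup>2] = s t + 2 min(s, t)\<^sup>2\<close> for a single Wiener process (split \<open>W(t)\<close> into the
  independent increments \<open>W(s)\<close> and \<open>W(t) - W(s)\<close>) and to \<open>s t\<close> for two independent ones.
  On the grid, \<open>\<Sum>\<^sub>k \<tau>\<^sub>k = h N (N - 1) / 2\<close> and
  \<open>\<Sum>\<^sub>k\<^sub>,\<^sub>l min(\<tau>\<^sub>k, \<tau>\<^sub>l)\<^sup>2 = h\<^sup>2 N (N - 1) (N\<^sup>2 - N + 1) / 6\<close>, and the closed form follows with \<open>T = N h\<close>.\<close>

lemma (in prob_space) centered_normal_moments:
  assumes X: "distributed M lborel X (\<lambda>x. ennreal (normal_density 0 (sqrt t) x))" and "t > 0"
  shows "integrable M (\<lambda>\<omega>. X \<omega> ^ k)"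
    and "expectation X = 0" and "expectation (\<lambda>\<omega>. X \<omega> ^ 2) = t"
    and "expectation (\<lambda>\<omega>. X \<omega> ^ 3) = 0" and "expectation (\<lambda>\<omega>. X \<omega> ^ 4) = 3 * t\<^sup>2"
proof -
  have sd: "sqrt t > 0" using \<open>t > 0\<close> by simp
  have even: "expectation (\<lambda>\<omega>. X \<omega> ^ (2 * n)) = fact (2 * n) / ((2 / t) ^ n * fact n)" for n
    using distributed_integral[OF X, of "\<lambda>x. x ^ (2 * n)"]
      integral_normal_moment_even[where \<mu>=0 and \<sigma>="sqrt t" and k=n] \<open>t > 0\<close> by simp
  have odd: "expectation (\<lambda>\<omega>. X \<omega> ^ (2 * n + 1)) = 0" for n
    using distributed_integral[OF X, of "\<lambda>x. x ^ (2 * n + 1)"]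
      integral_normal_moment_odd[where \<mu>=0 and \<sigma>="sqrt t" and k=n] sd by simp
  show "integrable M (\<lambda>\<omega>. X \<omega> ^ k)"
    using distributed_integrable[OF X, of "\<lambda>x. x ^ k"]
      integrable_normal_moment[where \<mu>=0 and \<sigma>="sqrt t" and k=k] sd by simp
  show "expectation X = 0" "expectation (\<lambda>\<omega>. X \<omega> ^ 3) = 0"
    using odd[of 0] odd[of 1] by (simp_all add: numeral_3_eq_3)
  show "expectation (\<lambda>\<omega>. X \<omega> ^ 2) = t" "expectation (\<lambda>\<omega>. X \<omega> ^ 4) = 3 * t\<^sup>2"
    using even[of 1] even[of 2] \<open>t > 0\<close> by (simp_all add: fact_numeral power2_eq_square)
qed

lemma (in prob_space) indep_var_expectation_powers:
  fixes X Y :: "'a \<Rightarrow> real"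
  assumes XY: "indep_var borel X borel Y"
    and "integrable M (\<lambda>\<omega>. X \<omega> ^ a)" and "integrable M (\<lambda>\<omega>. Y \<omega> ^ b)"
  shows "expectation (\<lambda>\<omega>. X \<omega> ^ a * Y \<omega> ^ b) = expectation (\<lambda>\<omega>. X \<omega> ^ a) * expectation (\<lambda>\<omega>. Y \<omega> ^ b)"
    and "integrable M (\<lambda>\<omega>. X \<omega> ^ a * Y \<omega> ^ b)"
proof -
  have "indep_var borel ((\<lambda>x. x ^ a) \<circ> X) borel ((\<lambda>y. y ^ b) \<circ> Y)"
    by (rule indep_var_compose[OF XY]) auto
  then show "expectation (\<lambda>\<omega>. X \<omega> ^ a * Y \<omega> ^ b) = expectation (\<lambda>\<omega>. X \<omega> ^ a) * expectation (\<lambda>\<omega>. Y \<omega> ^ b)"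
    and "integrable M (\<lambda>\<omega>. X \<omega> ^ a * Y \<omega> ^ b)"
    using indep_var_lebesgue_integral indep_var_integrable assms(2,3) by (simp_all add: comp_def)
qed

lemma wiener_processD:
  assumes "wiener_process P W"
  shows "prob_space P" and "W t \<in> borel_measurable P" and "AE \<omega> in P. W 0 \<omega> = 0"
    and "0 \<le> s \<Longrightarrow> s < t \<Longrightarrow> distributed P lborel (\<lambda>\<omega>. W t \<omega> - W s \<omega>)
          (\<lambda>x. ennreal (normal_density 0 (sqrt (t - s)) x))"
    and "sorted_wrt (<) ts \<Longrightarrow> (\<forall>t\<in>set ts. 0 \<le> t) \<Longrightarrow>
        prob_space.indep_vars P (\<lambda>_. borel) (\<lambda>k \<omega>. W (ts ! Suc k) \<omega> - W (ts ! k) \<omega>) {..<length ts - 1}"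
  using assms unfolding wiener_process_def by auto

lemma (in prob_space) wiener_process_moments:
  assumes W: "wiener_process M W" and "t \<ge> 0"
  shows "integrable M (\<lambda>\<omega>. W t \<omega> ^ k)"
    and "expectation (\<lambda>\<omega>. W t \<omega> ^ 2) = t" and "expectation (\<lambda>\<omega>. W t \<omega> ^ 4) = 3 * t\<^sup>2"
proof -
  note [measurable] = wiener_processD(2)[OF W]
  have AE_increment: "AE \<omega> in M. W t \<omega> = W t \<omega> - W 0 \<omega>"
    using wiener_processD(3)[OF W] by auto
  have "integrable M (\<lambda>\<omega>. (W t \<omega> - W 0 \<omega>) ^ k) \<and>
      expectation (\<lambda>\<omega>. (W t \<omega> - W 0 \<omega>) ^ 2) = t \<and> expectation (\<lambda>\<omega>. (W t \<omega> - W 0 \<omega>) ^ 4) = 3 * t\<^sup>2"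
  proof (cases "t = 0")
    case False
    then have "t > 0" using \<open>t \<ge> 0\<close> by simp
    with centered_normal_moments[OF wiener_processD(4)[OF W order_refl this]] show ?thesis by simp
  qed simp
  moreover have "expectation (\<lambda>\<omega>. W t \<omega> ^ n) = expectation (\<lambda>\<omega>. (W t \<omega> - W 0 \<omega>) ^ n)" for n
    by (rule integral_cong_AE) (use AE_increment in auto)
  moreover have "integrable M (\<lambda>\<omega>. W t \<omega> ^ k) \<longleftrightarrow> integrable M (\<lambda>\<omega>. (W t \<omega> - W 0 \<omega>) ^ k)"
    by (rule integrable_cong_AE) (use AE_increment in auto)
  ultimately show "integrable M (\<lambda>\<omega>. W t \<omega> ^ k)"
    and "expectation (\<lambda>\<omega>. W t \<omega> ^ 2) = t" and "expectation (\<lambda>\<omega>. W t \<omega> ^ 4) = 3 * t\<^sup>2"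
    by simp_all
qed

lemma (in prob_space) wiener_process_square_products_less:
  assumes W: "wiener_process M W" and "0 < s" and "s < t"
  shows "expectation (\<lambda>\<omega>. W s \<omega> ^ 2 * W t \<omega> ^ 2) = s * t + 2 * s\<^sup>2"
proof -
  note [measurable] = wiener_processD(2)[OF W]
  define X where "X = (\<lambda>\<omega>. W s \<omega> - W 0 \<omega>)"
  define Y where "Y = (\<lambda>\<omega>. W t \<omega> - W s \<omega>)"
  have X: "distributed M lborel X (\<lambda>x. ennreal (normal_density 0 (sqrt s) x))"
    using wiener_processD(4)[OF W, of 0 s] assms(2,3) by (simp add: X_def)
  have Y: "distributed M lborel Y (\<lambda>x. ennreal (normal_density 0 (sqrt (t - s)) x))"
    using wiener_processD(4)[OF W, of s t] assms(2,3) by (simp add: Y_def)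
  have "indep_vars (\<lambda>_. borel) (\<lambda>k \<omega>. W ([0, s, t] ! Suc k) \<omega> - W ([0, s, t] ! k) \<omega>) (insert 0 {1})"
    using wiener_processD(5)[OF W, of "[0, s, t]"] assms(2,3)
    by (simp add: lessThan_Suc numeral_2_eq_2 insert_commute)
  from indep_vars_sum[OF _ _ this] have XY: "indep_var borel X borel Y"
    by (simp add: X_def Y_def)
  note X_moments = centered_normal_moments[OF X assms(2)]
  have "0 < t - s" using assms(3) by simp
  note Y_moments = centered_normal_moments[OF Y this]
  have "AE \<omega> in M. W s \<omega> ^ 2 * W t \<omega> ^ 2 = X \<omega> ^ 4 + 2 * (X \<omega> ^ 3 * Y \<omega>) + X \<omega> ^ 2 * Y \<omega> ^ 2"
    using wiener_processD(3)[OF W] by eventually_elim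
      (simp add: X_def Y_def algebra_simps power2_eq_square power3_eq_cube power4_eq_xxxx)
  then have "expectation (\<lambda>\<omega>. W s \<omega> ^ 2 * W t \<omega> ^ 2)
      = expectation (\<lambda>\<omega>. X \<omega> ^ 4 + 2 * (X \<omega> ^ 3 * Y \<omega>) + X \<omega> ^ 2 * Y \<omega> ^ 2)"
    by (intro integral_cong_AE) (auto simp: X_def Y_def)
  also have "\<dots> = expectation (\<lambda>\<omega>. X \<omega> ^ 4) + 2 * (expectation (\<lambda>\<omega>. X \<omega> ^ 3) * expectation Y)
      + expectation (\<lambda>\<omega>. X \<omega> ^ 2) * expectation (\<lambda>\<omega>. Y \<omega> ^ 2)"
    using X_moments(1)[of 4] indep_var_expectation_powers[OF XY X_moments(1) Y_moments(1), of 3 1]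
      indep_var_expectation_powers[OF XY X_moments(1) Y_moments(1), of 2 2]
    by (simp add: Bochner_Integration.integral_add)
  also have "\<dots> = s * t + 2 * s\<^sup>2"
    by (simp add: X_moments(2-5) Y_moments(2-5)) (simp add: algebra_simps power2_eq_square)
  finally show ?thesis .
qed

lemma (in prob_space) wiener_process_square_products:
  assumes W: "wiener_process M W" and "0 \<le> s" and "s \<le> t"
  shows "expectation (\<lambda>\<omega>. W s \<omega> ^ 2 * W t \<omega> ^ 2) = s * t + 2 * s\<^sup>2"
proof -
  note [measurable] = wiener_processD(2)[OF W]
  consider "s = 0" | "s = t" | "0 < s" "s < t"
    using assms(2,3) by linarith
  then show ?thesis
  proof cases
    case 1
    have "AE \<omega> in M. W s \<omega> ^ 2 * W t \<omega> ^ 2 = 0"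
      using wiener_processD(3)[OF W] 1 by auto
    then have "expectation (\<lambda>\<omega>. W s \<omega> ^ 2 * W t \<omega> ^ 2) = expectation (\<lambda>_. 0)"
      by (intro integral_cong_AE) auto
    then show ?thesis using 1 by simp
  next
    case 2
    then show ?thesis
      using wiener_process_moments(3)[OF W, of t] assms(2)
      by (simp flip: power_add) (simp add: power2_eq_square)
  next
    case 3
    then show ?thesis
      using wiener_process_square_products_less[OF W] by simp
  qed
qed

lemma (in prob_space) integrable_square_mult_square:
  fixes X Y :: "'a \<Rightarrow> real"
  assumes "integrable M (\<lambda>\<omega>. X \<omega> ^ 4)" "integrable M (\<lambda>\<omega>. Y \<omega> ^ 4)"
    and [measurable]: "X \<in> borel_measurable M" "Y \<in> borel_measurable M"
  shows "integrable M (\<lambda>\<omega>. X \<omega> ^ 2 * Y \<omega> ^ 2)"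
proof (rule Bochner_Integration.integrable_bound)
  show "integrable M (\<lambda>\<omega>. X \<omega> ^ 4 + Y \<omega> ^ 4)" using assms(1,2) by simp
  have "X \<omega> ^ 2 * Y \<omega> ^ 2 \<le> X \<omega> ^ 4 + Y \<omega> ^ 4" for \<omega>
  proof -
    have "2 * (X \<omega> ^ 2 * Y \<omega> ^ 2) \<le> X \<omega> ^ 4 + Y \<omega> ^ 4"
      using sum_squares_bound[of "X \<omega> ^ 2" "Y \<omega> ^ 2"] by (simp add: power_mult[symmetric])
    moreover have "0 \<le> X \<omega> ^ 2 * Y \<omega> ^ 2" by simp
    ultimately show ?thesis by linarith
  qed
  then show "AE \<omega> in M. norm (X \<omega> ^ 2 * Y \<omega> ^ 2) \<le> norm (X \<omega> ^ 4 + Y \<omega> ^ 4)"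
    by (simp add: add_nonneg_nonneg)
qed simp

lemma (in prob_space) indep_wiener_processes_square_products:
  assumes W: "\<And>i. i \<in> I \<Longrightarrow> wiener_process M (W i)"
    and indep: "indep_vars (\<lambda>_. Pi\<^sub>M UNIV (\<lambda>_. borel)) (\<lambda>i \<omega>. \<lambda>t. W i t \<omega>) I"
    and "i \<in> I" "j \<in> I" "0 \<le> a" "0 \<le> b"
  shows "integrable M (\<lambda>\<omega>. W i a \<omega> ^ 2 * W j b \<omega> ^ 2)"
    and "expectation (\<lambda>\<omega>. W i a \<omega> ^ 2 * W j b \<omega> ^ 2) = a * b + (if i = j then 2 * (min a b)\<^sup>2 else 0)"
proof -
  note moments_i = wiener_process_moments[OF W[OF \<open>i \<in> I\<close>] \<open>0 \<le> a\<close>]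
  note moments_j = wiener_process_moments[OF W[OF \<open>j \<in> I\<close>] \<open>0 \<le> b\<close>]
  show "integrable M (\<lambda>\<omega>. W i a \<omega> ^ 2 * W j b \<omega> ^ 2)"
    using moments_i(1) moments_j(1) wiener_processD(2)[OF W[OF \<open>i \<in> I\<close>]]
      wiener_processD(2)[OF W[OF \<open>j \<in> I\<close>]]
    by (rule integrable_square_mult_square)
  show "expectation (\<lambda>\<omega>. W i a \<omega> ^ 2 * W j b \<omega> ^ 2) = a * b + (if i = j then 2 * (min a b)\<^sup>2 else 0)"
  proof (cases "i = j")
    case True
    note square_products = wiener_process_square_products[OF W[OF \<open>i \<in> I\<close>]]
    have "(\<lambda>\<omega>. W i a \<omega> ^ 2 * W i b \<omega> ^ 2) = (\<lambda>\<omega>. W i b \<omega> ^ 2 * W i a \<omega> ^ 2)"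
      by (simp add: mult.commute)
    then show ?thesis
      using True square_products[of a b] square_products[of b a] assms(5,6)
      by (cases "a \<le> b") (simp_all add: min_def mult.commute)
  next
    case False
    have "indep_vars (\<lambda>_. borel) (\<lambda>m \<omega>. W m (if m = i then a else b) \<omega>) (insert i {j})"
      by (rule indep_vars_compose2[OF indep_vars_subset[OF indep], where Y="\<lambda>m f. f (if m = i then a else b)"])
        (use assms(3,4) in auto)
    from indep_vars_sum[OF _ _ this] have "indep_var borel (W i a) borel (W j b)"
      using False by simp
    then show ?thesis
      using False indep_var_expectation_powers(1)[OF _ moments_i(1) moments_j(1)] moments_i(2) moments_j(2)
      by simp
  qed
qed

lemma (in prob_space) sampled_square_sum_moments:
  fixes W :: "'i \<Rightarrow> real \<Rightarrow> 'a \<Rightarrow> real" and \<tau> :: "'k \<Rightarrow> real"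
  assumes W: "\<And>i. i \<in> I \<Longrightarrow> wiener_process M (W i)"
    and indep: "indep_vars (\<lambda>_. Pi\<^sub>M UNIV (\<lambda>_. borel)) (\<lambda>i \<omega>. \<lambda>t. W i t \<omega>) I"
    and "finite I" "finite S" and \<tau>: "\<And>k. k \<in> S \<Longrightarrow> 0 \<le> \<tau> k"
  defines "G \<equiv> \<lambda>\<omega>. \<Sum>i\<in>I. \<Sum>k\<in>S. W i (\<tau> k) \<omega> ^ 2"
  shows "integrable M G" and "expectation G = card I * (\<Sum>k\<in>S. \<tau> k)"
    and "integrable M (\<lambda>\<omega>. G \<omega> ^ 2)"
    and "expectation (\<lambda>\<omega>. G \<omega> ^ 2)
      = (card I)\<^sup>2 * (\<Sum>k\<in>S. \<tau> k)\<^sup>2 + 2 * card I * (\<Sum>k\<in>S. \<Sum>l\<in>S. (min (\<tau> k) (\<tau> l))\<^sup>2)"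
proof -
  note moments = wiener_process_moments[OF W \<tau>]
  note products = indep_wiener_processes_square_products[OF W indep _ _ \<tau> \<tau>]
  show "integrable M G" unfolding G_def using moments(1) by simp
  show "expectation G = card I * (\<Sum>k\<in>S. \<tau> k)"
    unfolding G_def using moments(1,2) by (simp add: Bochner_Integration.integral_sum)
  have G_square: "G \<omega> ^ 2 = (\<Sum>i\<in>I. \<Sum>j\<in>I. \<Sum>k\<in>S. \<Sum>l\<in>S. W i (\<tau> k) \<omega> ^ 2 * W j (\<tau> l) \<omega> ^ 2)" for \<omega>
    unfolding G_def power2_eq_square[of "sum _ _"] by (simp add: sum_product)
  show "integrable M (\<lambda>\<omega>. G \<omega> ^ 2)"
    unfolding G_square using products(1) by simp
  have "expectation (\<lambda>\<omega>. G \<omega> ^ 2) = (\<Sum>i\<in>I. \<Sum>j\<in>I. \<Sum>k\<in>S. \<Sum>l\<in>S.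
      \<tau> k * \<tau> l + (if i = j then 2 * (min (\<tau> k) (\<tau> l))\<^sup>2 else 0))"
    unfolding G_square using products by (simp add: Bochner_Integration.integral_sum)
  also have "\<dots> = (\<Sum>i\<in>I. \<Sum>j\<in>I. \<Sum>k\<in>S. \<Sum>l\<in>S. \<tau> k * \<tau> l)
      + (\<Sum>i\<in>I. \<Sum>j\<in>I. if i = j then \<Sum>k\<in>S. \<Sum>l\<in>S. 2 * (min (\<tau> k) (\<tau> l))\<^sup>2 else 0)"
    by (simp add: sum.distrib) (auto intro!: sum.cong)
  also have "\<dots> = (card I)\<^sup>2 * (\<Sum>k\<in>S. \<tau> k)\<^sup>2 + 2 * card I * (\<Sum>k\<in>S. \<Sum>l\<in>S. (min (\<tau> k) (\<tau> l))\<^sup>2)"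
    using \<open>finite I\<close> by (simp add: power2_eq_square sum_product sum_distrib_left[symmetric])
  finally show "expectation (\<lambda>\<omega>. G \<omega> ^ 2)
      = (card I)\<^sup>2 * (\<Sum>k\<in>S. \<tau> k)\<^sup>2 + 2 * card I * (\<Sum>k\<in>S. \<Sum>l\<in>S. (min (\<tau> k) (\<tau> l))\<^sup>2)" .
qed

lemma (in prob_space) expectation_affine_square:
  fixes X :: "'a \<Rightarrow> real"
  assumes "integrable M X" and "integrable M (\<lambda>\<omega>. X \<omega> ^ 2)"
  shows "expectation (\<lambda>\<omega>. (a * X \<omega> - v)\<^sup>2)
    = a\<^sup>2 * expectation (\<lambda>\<omega>. X \<omega> ^ 2) - 2 * a * v * expectation X + v\<^sup>2"
proof -
  have "(\<lambda>\<omega>. (a * X \<omega> - v)\<^sup>2) = (\<lambda>\<omega>. a\<^sup>2 * X \<omega> ^ 2 - 2 * a * v * X \<omega> + v\<^sup>2)"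
    by (simp add: power2_eq_square algebra_simps)
  then show ?thesis
    using assms by (simp add: Bochner_Integration.integral_add Bochner_Integration.integral_diff prob_space)
qed

lemma (in prob_space) integral_expectation_scaled_wiener_square:
  assumes W: "wiener_process M W" and "0 \<le> T"
  shows "integral {0..T} (\<lambda>t. expectation (\<lambda>\<omega>. (c * W t \<omega>)\<^sup>2)) = c\<^sup>2 * T\<^sup>2 / 2"
proof -
  have "integral {0..T} (\<lambda>t. expectation (\<lambda>\<omega>. (c * W t \<omega>)\<^sup>2)) = integral {0..T} (\<lambda>t. c\<^sup>2 * t)"
    using wiener_process_moments(2)[OF W] by (intro integral_cong) (simp add: power_mult_distrib)
  also have "\<dots> = c\<^sup>2 * T\<^sup>2 / 2"
    using ident_has_integral[of 0 T] \<open>0 \<le> T\<close> by (simp add: integral_unique has_integral_mult_right)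
  finally show ?thesis .
qed

lemma sum_of_nat_lessThan: "(\<Sum>k<n. real k) = real n * (real n - 1) / 2"
  by (induction n) (auto simp: field_simps)

lemma sum_of_nat_square_lessThan: "(\<Sum>k<n. (real k)\<^sup>2) = real n * (real n - 1) * (2 * real n - 1) / 6"
  by (induction n) (auto simp: field_simps power2_eq_square)

lemma sum_min_square_lessThan:
  "(\<Sum>k<n. \<Sum>l<n. (real (min k l))\<^sup>2) = real n * (real n - 1) * ((real n)\<^sup>2 - real n + 1) / 6"
proof (induction n)
  case (Suc n)
  have "(\<Sum>k<Suc n. \<Sum>l<Suc n. (real (min k l))\<^sup>2)
      = (\<Sum>k<n. \<Sum>l<n. (real (min k l))\<^sup>2) + 2 * (\<Sum>k<n. (real k)\<^sup>2) + (real n)\<^sup>2"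
    by (simp add: sum.distrib min_def)
  then show ?case
    unfolding Suc.IH sum_of_nat_square_lessThan by (simp add: field_simps power2_eq_square)
qed simp

theorem corollary3p2:
  fixes P :: "'a measure"
    and W :: "nat \<Rightarrow> real \<Rightarrow> 'a \<Rightarrow> real"
    and \<sigma> T h :: real
    and N M :: nat
  assumes "prob_space P"
    and "\<And>i. i < M \<Longrightarrow> wiener_process P (W i)"
    and "prob_space.indep_vars P (\<lambda>_. Pi\<^sub>M UNIV (\<lambda>_. borel))
           (\<lambda>i \<omega>. \<lambda>t. W i t \<omega>) {..<M}"
    and "\<sigma> > 0" and "T > 0" and "h > 0"
    and "N > 0" and "real N * h = T"
    and "M \<ge> 1"
  shows
    "(let x = (\<lambda>i t \<omega>. \<sigma> * W i t \<omega>);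
          Vhat = (\<lambda>\<omega>. (1 / real M) *
                   (\<Sum>i<M. \<Sum>k<N. h * (x i (real k * h) \<omega>)\<^sup>2));
          V_T = integral {0..T} (\<lambda>t. prob_space.expectation P (\<lambda>\<omega>. (x 0 t \<omega>)\<^sup>2));
          B = real (M * N)
      in prob_space.expectation P (\<lambda>\<omega>. (Vhat \<omega> - V_T)\<^sup>2)
         = \<sigma>^4 * T\<^sup>2 / 4 * h\<^sup>2 + \<sigma>^4 * T^5 / 3 * (1 / (h * B))
           + \<sigma>^4 * T\<^sup>2 * (- 2 * T\<^sup>2 + 2 * h * T - h\<^sup>2) / (3 * B))"
proof -
  interpret prob_space P by fact
  define \<tau> where "\<tau> k = real k * h" for k
  define G where "G \<omega> = (\<Sum>i<M. \<Sum>k<N. W i (\<tau> k) \<omega> ^ 2)" for \<omega>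
  have W: "\<And>i. i \<in> {..<M} \<Longrightarrow> wiener_process P (W i)" and \<tau>_nonneg: "0 \<le> \<tau> k" for k
    using assms(2,6) by (auto simp: \<tau>_def)
  note G_moments = sampled_square_sum_moments[where S="{..<N}" and \<tau>=\<tau>,
      OF W assms(3) finite_lessThan finite_lessThan \<tau>_nonneg, folded G_def, simplified]
  have Vhat: "(1 / real M) * (\<Sum>i<M. \<Sum>k<N. h * (\<sigma> * W i (real k * h) \<omega>)\<^sup>2) = h * \<sigma>\<^sup>2 / M * G \<omega>" for \<omega>
    by (simp add: G_def \<tau>_def sum_distrib_left power_mult_distrib mult_ac)
  have V_T: "integral {0..T} (\<lambda>t. expectation (\<lambda>\<omega>. (\<sigma> * W 0 t \<omega>)\<^sup>2)) = \<sigma>\<^sup>2 * T\<^sup>2 / 2"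
    using integral_expectation_scaled_wiener_square[OF assms(2)] assms(5,9) by simp
  have sum_\<tau>: "(\<Sum>k<N. \<tau> k) = h * (real N * (real N - 1) / 2)"
    by (simp add: \<tau>_def sum_distrib_right[symmetric] sum_of_nat_lessThan)
  have "min (\<tau> k) (\<tau> l) = h * real (min k l)" for k l
    using assms(6) by (simp add: \<tau>_def min_def)
  then have sum_min_\<tau>: "(\<Sum>k<N. \<Sum>l<N. (min (\<tau> k) (\<tau> l))\<^sup>2)
      = h\<^sup>2 * (real N * (real N - 1) * ((real N)\<^sup>2 - real N + 1) / 6)"
    by (simp add: sum_distrib_left power_mult_distrib sum_min_square_lessThan[symmetric])
  show ?thesis
    unfolding Let_def Vhat V_T expectation_affine_square[OF G_moments(1,3)] G_moments(2,4) sum_\<tau> sum_min_\<tau>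
    unfolding assms(8)[symmetric] using assms(6,7,9) by (simp add: field_simps) algebra
qed

end
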